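(* Let $S=\langle x_1,\ldots,x_n\rangle$ be a right non-degenerate semigroup of skew type. Then $S$ has the over-jumping property: for every $a\in S$ and every $i\in\{1,\ldots,n\}$ there exist an integer $k\ge 1$ and $w\in S$ such that $aw=x_i^ka$.
   Context: A semigroup of skew type is a monoid $S$ with a monoid presentation $S=\langle x_1,\ldots,x_n \mid x_ix_j=x_kx_l\rangle$ consisting of $\binom{n}{2}$ relations, each of the form $x_ix_j=x_kx_l$ with $i\neq j$, $k\neq l$, such that every word $x_px_q$ with $p\neq q$ appears (as one side) in exactly one of the relations; $X=\{x_1,\ldots,x_n\}$. For $a,b\in X$, the partner of $ab$ is the other side of the unique defining relation containing $ab$ if $a\neq b$, and $ab$ itself if $a=b$. $S$ is right non-degenerate if for every $x\in X$ the map $X\to X$ sending $y$ to the first letter of the partner of $xy$ is surjective. *)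

theory Defs
  imports Main
begin

text \<open>Generators x_1,...,x_n are encoded by the indices 0,...,n-1; words in the free
monoid are lists of indices. A defining relation x_i x_j = x_k x_l is encoded as the
pair ((i,j),(k,l)); a presentation is a set R of such relations.\<close>

type_synonym rel2 = "(nat \<times> nat) \<times> (nat \<times> nat)"

definition word2 :: "nat \<times> nat \<Rightarrow> nat list" where
  "word2 p = [fst p, snd p]"

definition skew_type :: "nat \<Rightarrow> rel2 set \<Rightarrow> bool" where
  "skew_type n R \<longleftrightarrow>
     finite R \<and> card R = n choose 2 \<and>
     (\<forall>((i,j),(k,l)) \<in> R. i < n \<and> j < n \<and> k < n \<and> l < n \<and> i \<noteq> j \<and> k \<noteq> l) \<and>
     (\<forall>p < n. \<forall>q < n. p \<noteq> q \<longrightarrow>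
        (\<exists>!r. r \<in> R \<and> (fst r = (p,q) \<or> snd r = (p,q))))"

definition pres_step :: "rel2 set \<Rightarrow> nat list \<Rightarrow> nat list \<Rightarrow> bool" where
  "pres_step R u v \<longleftrightarrow> (\<exists>a b r. r \<in> R \<and>
      ((u = a @ word2 (fst r) @ b \<and> v = a @ word2 (snd r) @ b) \<or>
       (u = a @ word2 (snd r) @ b \<and> v = a @ word2 (fst r) @ b)))"

text \<open>Equality in the monoid S presented by R: the congruence generated by R.\<close>
definition pres_eq :: "rel2 set \<Rightarrow> nat list \<Rightarrow> nat list \<Rightarrow> bool" where
  "pres_eq R u v \<longleftrightarrow> (pres_step R)\<^sup>*\<^sup>* u v"

definition partner :: "rel2 set \<Rightarrow> nat \<Rightarrow> nat \<Rightarrow> nat \<times> nat" where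
  "partner R i j = (if i = j then (i, j)
     else THE q. ((i,j), q) \<in> R \<or> (q, (i,j)) \<in> R)"

definition right_nondegenerate :: "nat \<Rightarrow> rel2 set \<Rightarrow> bool" where
  "right_nondegenerate n R \<longleftrightarrow>
     (\<forall>x < n. (\<lambda>y. fst (partner R x y)) ` {..<n} = {..<n})"

end

theory Submission
  imports Defs "HOL-Combinatorics.Permutations"
begin

(* Pushing the generator x_i through a word c letter by letter, each time replacing x_z x_j by
   its partner, gives x_i c = c' y in S with |c'| = |c|.  Right non-degeneracy makes c |-> c'
   injective, hence a permutation of the finite set of words of length |a|; so the k-th
   iterate fixes a for some k >= 1, and pushing x_i^k through a yields x_i^k a = a w. *)

lemma funpow_returns_on_finite_invariant_set:
  assumes "finite A" "inj_on f A" "f ` A \<subseteq> A" "x \<in> A"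
  obtains k where "k > 0" "(f ^^ k) x = x"
proof -
  define p where "p y = (if y \<in> A then f y else y)" for y
  have "bij_betw f A A"
    using assms by (simp add: bij_betw_def endo_inj_surj)
  then have "p permutes A"
    by (intro bij_imp_permutes) (auto simp: p_def cong: bij_betw_cong)
  then obtain k where "k > 0" "(p ^^ k) x = x"
    using \<open>finite A\<close> permutation_self permutes_imp_permutation by metis
  moreover have "(p ^^ j) x = (f ^^ j) x \<and> (f ^^ j) x \<in> A" for j
    using assms by (induction j) (auto simp: p_def)
  ultimately show thesis
    using that by simp
qed

lemma pres_eq_refl [simp]: "pres_eq R u u"
  by (simp add: pres_eq_def)

lemma pres_eq_trans [trans]: "pres_eq R u v \<Longrightarrow> pres_eq R v w \<Longrightarrow> pres_eq R u w"
  unfolding pres_eq_def by simp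

lemma pres_step_append_context: "pres_step R u v \<Longrightarrow> pres_step R (p @ u @ s) (p @ v @ s)"
  unfolding pres_step_def by (metis append.assoc)

lemma pres_eq_append_context: "pres_eq R u v \<Longrightarrow> pres_eq R (p @ u @ s) (p @ v @ s)"
  unfolding pres_eq_def
  by (induction rule: rtranclp_induct)
    (auto intro: rtranclp.rtrancl_into_rtrancl pres_step_append_context)

lemma partner_mem:
  assumes "skew_type n R" "i < n" "j < n" "i \<noteq> j"
  shows "((i, j), partner R i j) \<in> R \<or> (partner R i j, (i, j)) \<in> R"
proof -
  from assms obtain r where r: "r \<in> R" "fst r = (i, j) \<or> snd r = (i, j)"
    and unique: "\<And>r'. r' \<in> R \<Longrightarrow> fst r' = (i, j) \<or> snd r' = (i, j) \<Longrightarrow> r' = r"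
    unfolding skew_type_def by metis
  define q where "q = (if fst r = (i, j) then snd r else fst r)"
  have "\<exists>!q. ((i, j), q) \<in> R \<or> (q, (i, j)) \<in> R"
  proof
    show "((i, j), q) \<in> R \<or> (q, (i, j)) \<in> R"
      using r by (cases r) (auto simp: q_def)
  next
    fix q' assume "((i, j), q') \<in> R \<or> (q', (i, j)) \<in> R"
    then show "q' = q"
      using unique by (fastforce simp: q_def)
  qed
  from theI'[OF this] show ?thesis
    using \<open>i \<noteq> j\<close> unfolding partner_def by simp
qed

lemma partner_less:
  assumes "skew_type n R" "i < n" "j < n"
  shows "fst (partner R i j) < n \<and> snd (partner R i j) < n"
  using partner_mem[OF assms] assms unfolding skew_type_def
  by (cases "i = j"; cases "partner R i j") (fastforce simp: partner_def)+

lemma pres_eq_partner: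
  assumes "skew_type n R" "i < n" "j < n"
  shows "pres_eq R [fst (partner R i j), snd (partner R i j)] [i, j]"
proof (cases "i = j")
  case True
  then show ?thesis by (simp add: partner_def)
next
  case False
  have "pres_step R ([] @ word2 (partner R i j) @ []) ([] @ word2 (i, j) @ [])"
    using partner_mem[OF assms False] unfolding pres_step_def by (metis fst_conv snd_conv)
  then show ?thesis
    unfolding pres_eq_def word2_def by simp
qed

lemma inj_on_fst_partner:
  assumes "right_nondegenerate n R" "i < n"
  shows "inj_on (\<lambda>j. fst (partner R i j)) {..<n}"
  using assms by (simp add: right_nondegenerate_def inj_on_iff_eq_card)

fun pass_word :: "rel2 set \<Rightarrow> nat \<Rightarrow> nat list \<Rightarrow> nat list" where
  "pass_word R z [] = []"
| "pass_word R z (j # c) = fst (partner R z j) # pass_word R (snd (partner R z j)) c"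

fun pass_letter :: "rel2 set \<Rightarrow> nat \<Rightarrow> nat list \<Rightarrow> nat" where
  "pass_letter R z [] = z"
| "pass_letter R z (j # c) = pass_letter R (snd (partner R z j)) c"

lemma length_pass_word [simp]: "length (pass_word R z c) = length c"
  by (induction c arbitrary: z) auto

lemma set_pass_word_subset:
  assumes "skew_type n R"
  shows "z < n \<Longrightarrow> set c \<subseteq> {..<n} \<Longrightarrow> set (pass_word R z c) \<subseteq> {..<n}"
  by (induction c arbitrary: z) (auto simp: partner_less[OF assms])

lemma pass_letter_less:
  assumes "skew_type n R"
  shows "z < n \<Longrightarrow> set c \<subseteq> {..<n} \<Longrightarrow> pass_letter R z c < n"
  by (induction c arbitrary: z) (auto simp: partner_less[OF assms])

lemma pres_eq_pass_word:
  assumes "skew_type n R"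
  shows "z < n \<Longrightarrow> set c \<subseteq> {..<n} \<Longrightarrow>
    pres_eq R (pass_word R z c @ [pass_letter R z c]) (z # c)"
proof (induction c arbitrary: z)
  case Nil
  then show ?case by simp
next
  case (Cons j c)
  let ?x = "fst (partner R z j)" and ?y = "snd (partner R z j)"
  have "pres_eq R (pass_word R ?y c @ [pass_letter R ?y c]) (?y # c)"
    using Cons partner_less[OF assms] by simp
  then have "pres_eq R (pass_word R z (j # c) @ [pass_letter R z (j # c)]) ([?x] @ (?y # c) @ [])"
    using pres_eq_append_context[of R _ _ "[?x]" "[]"] by simp
  also have "pres_eq R \<dots> ([] @ [z, j] @ c)"
    using pres_eq_append_context[OF pres_eq_partner[OF assms], of z j "[]" c] Cons.prems by simp
  finally show ?case by simp
qed

lemma inj_on_pass_word: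
  assumes "skew_type n R" "right_nondegenerate n R" "z < n"
  shows "inj_on (pass_word R z) {c. set c \<subseteq> {..<n}}"
proof (rule inj_onI)
  fix c d assume "c \<in> {c. set c \<subseteq> {..<n}}" "d \<in> {c. set c \<subseteq> {..<n}}"
    and "pass_word R z c = pass_word R z d"
  with \<open>z < n\<close> show "c = d"
  proof (induction c arbitrary: z d)
    case Nil
    then show ?case by (cases d) auto
  next
    case (Cons j c)
    then obtain j' d' where d: "d = j' # d'" by (cases d) auto
    with Cons.prems have "j = j'"
      using inj_onD[OF inj_on_fst_partner[OF assms(2) \<open>z < n\<close>]] by auto
    then show ?case
      using Cons.IH[of "snd (partner R z j)" d'] Cons.prems d partner_less[OF assms(1)] by auto
  qed
qed

lemma pres_eq_funpow_pass_word:
  assumes "skew_type n R" "i < n"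
  shows "set c \<subseteq> {..<n} \<Longrightarrow>
    \<exists>w. set w \<subseteq> {..<n} \<and> pres_eq R ((pass_word R i ^^ k) c @ w) (replicate k i @ c)"
proof (induction k arbitrary: c)
  case 0
  then show ?case by (intro exI[of _ "[]"]) simp
next
  case (Suc k)
  let ?c' = "pass_word R i c" and ?y = "pass_letter R i c"
  obtain w where w: "set w \<subseteq> {..<n}"
    "pres_eq R ((pass_word R i ^^ k) ?c' @ w) (replicate k i @ ?c')"
    using Suc set_pass_word_subset[OF assms] by blast
  have "pres_eq R ((pass_word R i ^^ Suc k) c @ w @ [?y]) (replicate k i @ ?c' @ [?y])"
    using pres_eq_append_context[OF w(2), of "[]" "[?y]"] by (simp add: funpow_swap1)
  also have "pres_eq R \<dots> (replicate (Suc k) i @ c)"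
    using pres_eq_append_context[OF pres_eq_pass_word[OF assms(1)], of i c "replicate k i" "[]"]
      Suc.prems assms(2) by (simp add: replicate_app_Cons_same)
  finally show ?case
    using w(1) pass_letter_less[OF assms] Suc.prems
    by (intro exI[of _ "w @ [?y]"]) auto
qed

theorem proposition4p1:
  "\<lbrakk>skew_type n R; right_nondegenerate n R; set (a :: nat list) \<subseteq> {..<n}; i < n\<rbrakk>
   \<Longrightarrow> \<exists>k \<ge> (1::nat). \<exists>w. set w \<subseteq> {..<n} \<and> pres_eq R (a @ w) (replicate k i @ a)"
proof -
  assume sk: "skew_type n R" and rnd: "right_nondegenerate n R" and a: "set a \<subseteq> {..<n}"
    and i: "i < n"
  define A where "A = {c. set c \<subseteq> {..<n} \<and> length c = length a}"
  have "finite A"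
    unfolding A_def by (rule finite_lists_length_eq) simp
  moreover have "inj_on (pass_word R i) A"
    using inj_on_pass_word[OF sk rnd i] by (rule inj_on_subset) (auto simp: A_def)
  moreover have "pass_word R i ` A \<subseteq> A"
    using set_pass_word_subset[OF sk i] by (auto simp: A_def)
  moreover have "a \<in> A"
    using a by (simp add: A_def)
  ultimately obtain k where "k > 0" "(pass_word R i ^^ k) a = a"
    by (rule funpow_returns_on_finite_invariant_set)
  then show ?thesis
    using pres_eq_funpow_pass_word[OF sk i a, of k] by (auto intro!: exI[of _ k])
qed

end
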